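(* Let $j = \pm 1$ and let $n$ and $r$ be positive integers. Define \[ \mu_{n} = \prod_{p \mid n,\ p \text{ prime}} p^{1/(p-1)}. \] Then the coefficients of the polynomial \[ \binom{2r}{r}\, {}_{2}F_{1}\!\left(-r,-r+j/n;-2r;n\mu_{n}X\right) \] are algebraic integers.
   Context: ${}_{2}F_{1}(a,b;c;X) = \sum_{s\geq0}\frac{(a)_{s}(b)_{s}}{(c)_{s}\,s!}X^{s}$ with $(y)_{s} = y(y+1)\cdots(y+s-1)$; with $a=-r$ and $c=-2r$ this is the polynomial $\sum_{s=0}^{r}\frac{(-r)_{s}(-r+j/n)_{s}}{(-2r)_{s}\,s!}X^{s}$. *)

theory Defs
  imports "HOL-Computational_Algebra.Computational_Algebra"
begin


definition mu :: "nat \<Rightarrow> real" where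
  "mu n = (\<Prod>p\<in>prime_factors n. real p powr (1 / (real p - 1)))"

definition hyp2F1_poly :: "nat \<Rightarrow> real \<Rightarrow> real poly" where
  "hyp2F1_poly r b = (\<Sum>s\<le>r. monom (pochhammer (- real r) s * pochhammer b s
       / (pochhammer (- 2 * real r) s * fact s)) s)"

end

theory Submission
  imports Defs "HOL-Number_Theory.Cong"
begin

text \<open>The coefficient of X^s is C(2r-s, r) * P / s! * mu_n^s with
  P = n^s (-r + j/n)_s = prod_{k<s} (j - rn + nk), since C(2r, r) (-r)_s / (-2r)_s = C(2r-s, r).
  Split s! = A B, where A collects the primes dividing n and B is coprime to n. As n is
  invertible modulo B, P is congruent modulo B to n^s times a Pochhammer symbol of an integer,
  which s! divides; so B divides P. What remains, mu_n^s / A, is a product of powers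
  p^(s/(p-1) - v_p(s!)) whose exponents are nonnegative by Legendre's formula
  (p-1) v_p(s!) <= s. Hence a power of the coefficient is an integer.\<close>

definition root_of_int :: "'a :: comm_ring_1 \<Rightarrow> bool" where
  "root_of_int x \<longleftrightarrow> (\<exists>L>0. x ^ L \<in> \<int>)"

lemma root_of_intI: "L > 0 \<Longrightarrow> x ^ L \<in> \<int> \<Longrightarrow> root_of_int x"
  unfolding root_of_int_def by blast

lemma root_of_int_Ints: "x \<in> \<int> \<Longrightarrow> root_of_int x"
  by (rule root_of_intI[of 1]) auto

lemma root_of_int_mult:
  assumes "root_of_int x" "root_of_int y"
  shows "root_of_int (x * y)"
proof -
  obtain a b where ab: "a > 0" "b > 0" "x ^ a \<in> \<int>" "y ^ b \<in> \<int>"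
    using assms unfolding root_of_int_def by blast
  have "(x * y) ^ (a * b) = (x ^ a) ^ b * (y ^ b) ^ a"
    by (simp add: power_mult_distrib mult.commute flip: power_mult)
  also have "\<dots> \<in> \<int>"
    using ab by (intro Ints_mult Ints_power[of "x ^ a"] Ints_power[of "y ^ b"])
  finally show ?thesis
    using ab by (intro root_of_intI[of "a * b"]) auto
qed

lemma root_of_int_power:
  assumes "root_of_int x"
  shows "root_of_int (x ^ k)"
proof -
  obtain a where a: "a > 0" "x ^ a \<in> \<int>"
    using assms unfolding root_of_int_def by blast
  have "(x ^ k) ^ a = (x ^ a) ^ k"
    by (simp add: mult.commute flip: power_mult)
  then show ?thesis
    using a by (intro root_of_intI[of a]) auto
qed

lemma root_of_int_prod:
  "(\<And>p. p \<in> F \<Longrightarrow> root_of_int (f p)) \<Longrightarrow> root_of_int (prod f F)"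
  by (induction F rule: infinite_finite_induct) (auto intro: root_of_int_mult root_of_int_Ints)

lemma root_of_int_imp_algebraic_int:
  fixes x :: "'a :: field_char_0"
  assumes "root_of_int x"
  shows "algebraic_int x"
proof -
  obtain L m where L: "L > 0" "x ^ L = of_int m"
    using assms unfolding root_of_int_def by (auto elim: Ints_cases)
  show ?thesis
  proof (rule algebraic_int_root[where y = "x ^ L" and p = "monom 1 L"])
    show "algebraic_int (x ^ L)"
      using L(2) by simp
  qed (use L(1) in \<open>auto simp: poly_monom degree_monom_eq coeff_monom\<close>)
qed

fun digit_sum :: "nat \<Rightarrow> nat \<Rightarrow> nat" where
  "digit_sum p m = (if m = 0 \<or> p < 2 then 0 else m mod p + digit_sum p (m div p))"

declare digit_sum.simps [simp del]

lemma digit_sum_rec: "p \<ge> 2 \<Longrightarrow> digit_sum p m = m mod p + digit_sum p (m div p)"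
  by (cases "m = 0") (simp_all add: digit_sum.simps[of p m] digit_sum.simps[of p 0])

lemma digit_sum_Suc:
  assumes "prime p"
  shows "digit_sum p (Suc m) + (p - 1) * multiplicity p (Suc m) = digit_sum p m + 1"
proof (induction m rule: less_induct)
  case (less m)
  have p2: "p \<ge> 2"
    using assms prime_ge_2_nat by blast
  show ?case
  proof (cases "p dvd Suc m")
    case False
    then have "Suc m mod p = m mod p + 1" "Suc m div p = m div p"
      by (auto simp: mod_Suc div_Suc dvd_eq_mod_eq_0)
    then show ?thesis
      using digit_sum_rec[OF p2, of "Suc m"] digit_sum_rec[OF p2, of m] False
      by (simp add: not_dvd_imp_multiplicity_0)
  next
    case True
    then obtain q where q: "Suc m = p * Suc q"
      by (metis dvd_def mult_0_right nat.distinct(1) not0_implies_Suc)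
    have "2 * Suc q \<le> Suc m"
      using q p2 by (metis mult_le_mono1)
    then have "q < m"
      by simp
    have m: "m = (p - 1) + q * p"
      using q p2 by (simp add: algebra_simps)
    have m_mod: "m mod p = p - 1"
      using p2 unfolding m mod_mult_self1 by simp
    have m_div: "m div p = q"
      using p2 unfolding m by (subst div_mult_self1) auto
    have "digit_sum p (Suc m) = digit_sum p (Suc q)"
      using digit_sum_rec[OF p2, of "Suc m"] q p2 by simp
    moreover have "digit_sum p m = (p - 1) + digit_sum p q"
      using digit_sum_rec[OF p2, of m] m_mod m_div by simp
    moreover have "multiplicity p (Suc m) = Suc (multiplicity p (Suc q))"
      using q p2 multiplicity_times_same[where p = p and x = "Suc q"] by simp
    ultimately show ?thesis
      using less.IH[OF \<open>q < m\<close>] by (simp add: algebra_simps)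
  qed
qed

lemma digit_sum_plus_multiplicity_fact:
  assumes "prime p"
  shows "digit_sum p s + (p - 1) * multiplicity p (fact s :: nat) = s"
proof (induction s)
  case 0
  then show ?case by (simp add: digit_sum.simps)
next
  case (Suc s)
  have "multiplicity p (fact (Suc s) :: nat) = multiplicity p (Suc s * fact s)"
    by simp
  also have "\<dots> = multiplicity p (Suc s) + multiplicity p (fact s :: nat)"
    using assms by (intro prime_elem_multiplicity_mult_distrib) auto
  finally have "multiplicity p (fact (Suc s) :: nat) = \<dots>" .
  then show ?case
    using digit_sum_Suc[OF assms, of s] Suc by (simp add: algebra_simps)
qed

lemma multiplicity_fact_le:
  "prime p \<Longrightarrow> (p - 1) * multiplicity p (fact s :: nat) \<le> s"
  using digit_sum_plus_multiplicity_fact le_add2 by metis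

lemma prime_factors_part_decomposition:
  fixes x n :: nat
  assumes "x > 0" "n > 0"
  obtains B where "x = (\<Prod>p\<in>prime_factors n. p ^ multiplicity p x) * B" "coprime B n"
proof -
  define f where "f p = p ^ multiplicity p x" for p :: nat
  define S where "S = prime_factors x"
  have "x = prod f S"
    using prod_prime_factors[of x] assms(1) by (simp add: f_def S_def)
  also have "\<dots> = prod f (S \<inter> prime_factors n) * prod f (S - prime_factors n)"
    by (rule prod.Int_Diff) (simp add: S_def)
  also have "prod f (S \<inter> prime_factors n) = prod f (prime_factors n)"
  proof (rule prod.mono_neutral_left)
    show "\<forall>p\<in>prime_factors n - S \<inter> prime_factors n. f p = 1"
    proof
      fix p assume "p \<in> prime_factors n - S \<inter> prime_factors n"
      then have "\<not> p dvd x"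
        using assms by (auto simp: S_def in_prime_factors_iff)
      then show "f p = 1"
        by (simp add: f_def not_dvd_imp_multiplicity_0)
    qed
  qed auto
  finally have "x = prod f (prime_factors n) * prod f (S - prime_factors n)" .
  moreover have "coprime (prod f (S - prime_factors n)) n"
  proof (rule prod_coprime_left)
    fix p assume "p \<in> S - prime_factors n"
    then have "prime p" "\<not> p dvd n"
      using assms by (auto simp: S_def in_prime_factors_iff)
    then show "coprime (f p) n"
      by (simp add: f_def prime_imp_coprime)
  qed
  ultimately show ?thesis
    using that unfolding f_def by blast
qed

lemma dvd_prod_arith_progression:
  fixes a d B :: int
  assumes "coprime d B" "B dvd fact s"
  shows "B dvd (\<Prod>k<s. a + d * int k)"
proof -
  obtain d' where d': "[d * d' = 1] (mod B)"
    using cong_solve_coprime_int[OF assms(1)] by blast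
  have "[a * (d * d') + d * int k = a * 1 + d * int k] (mod B)" for k
    by (intro cong_add cong_mult cong_refl d')
  then have "[(\<Prod>k<s. a + d * int k) = (\<Prod>k<s. d * (a * d' + int k))] (mod B)"
    by (intro cong_prod) (simp add: cong_sym_eq algebra_simps)
  moreover have "(\<Prod>k<s. d * (a * d' + int k)) = d ^ s * pochhammer (a * d') s"
    by (simp add: pochhammer_prod prod.distrib lessThan_atLeast0)
  moreover have "B dvd d ^ s * pochhammer (a * d') s"
    using assms(2) fact_dvd_pochhammer[of s "a * d'"] by (blast intro: dvd_trans dvd_mult)
  ultimately show ?thesis
    using cong_dvd_iff by metis
qed

lemma coeff_hyp2F1_poly:
  "coeff (hyp2F1_poly r b) s = (if s \<le> r then
     pochhammer (- real r) s * pochhammer b s / (pochhammer (- 2 * real r) s * fact s) else 0)"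
  unfolding hyp2F1_poly_def coeff_sum coeff_monom by (auto simp: sum.delta)

lemma central_binomial_pochhammer_quotient:
  "s \<le> r \<Longrightarrow> real ((2 * r) choose r) * pochhammer (- real r) s / pochhammer (- 2 * real r) s
     = real ((2 * r - s) choose r)"
proof (induction s)
  case 0
  then show ?case by simp
next
  case (Suc s)
  then have "s < r" by simp
  then have nz: "pochhammer (- 2 * real r) s \<noteq> 0" "- 2 * real r + real s \<noteq> 0"
    by (auto simp: pochhammer_eq_0_iff)
  have absorb: "real (r - s) * real ((2 * r - s) choose r) = real (2 * r - s) * real ((2 * r - Suc s) choose r)"
    using binomial_absorb_comp[of "2 * r - s" r] \<open>s < r\<close>
    by (metis diff_diff_left mult_2 add_diff_cancel_left' diff_commute of_nat_mult Suc_eq_plus1)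
  have "real ((2 * r) choose r) * pochhammer (- real r) (Suc s) / pochhammer (- 2 * real r) (Suc s)
      = real ((2 * r) choose r) * pochhammer (- real r) s / pochhammer (- 2 * real r) s
        * ((- real r + real s) / (- 2 * real r + real s))"
    using nz by (simp add: pochhammer_Suc field_simps)
  also have "\<dots> = real ((2 * r - s) choose r) * (real (r - s) / real (2 * r - s))"
    using Suc \<open>s < r\<close> by (simp add: of_nat_diff) (simp add: field_simps)
  also have "\<dots> = real ((2 * r - Suc s) choose r)"
    using absorb \<open>s < r\<close> by (simp add: field_simps)
  finally show ?case .
qed

lemma power_mult_pochhammer_divide:
  fixes a c :: "'a :: field"
  assumes "c \<noteq> 0"
  shows "c ^ s * pochhammer (a / c) s = (\<Prod>k<s. a + c * of_nat k)"
proof -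
  have "c ^ s * pochhammer (a / c) s = (\<Prod>k<s. c * (a / c + of_nat k))"
    by (simp add: pochhammer_prod prod.distrib lessThan_atLeast0)
  also have "\<dots> = (\<Prod>k<s. a + c * of_nat k)"
    using assms by (intro prod.cong refl) (simp add: distrib_left)
  finally show ?thesis .
qed

lemma mu_eq_prod_root: "mu n = (\<Prod>p\<in>prime_factors n. root (p - 1) (real p))"
  unfolding mu_def
proof (intro prod.cong refl)
  fix p assume "p \<in> prime_factors n"
  then have "p \<ge> 2"
    by (auto intro: prime_ge_2_nat)
  then show "real p powr (1 / (real p - 1)) = root (p - 1) (real p)"
    by (simp add: root_powr_inverse of_nat_diff)
qed

lemma root_of_int_mu_power_divide:
  "root_of_int (mu n ^ s / real (\<Prod>p\<in>prime_factors n. p ^ multiplicity p (fact s :: nat)))"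
proof -
  define e where "e p = multiplicity p (fact s :: nat)" for p
  have quotient: "root (p - 1) (real p) ^ s / real p ^ e p = root (p - 1) (real p) ^ (s - (p - 1) * e p)"
    if "prime p" for p
  proof -
    have "p \<ge> 2"
      using that prime_ge_2_nat by blast
    have "s = (s - (p - 1) * e p) + (p - 1) * e p"
      using multiplicity_fact_le[OF that, of s] by (simp add: e_def)
    then have "root (p - 1) (real p) ^ s
        = root (p - 1) (real p) ^ (s - (p - 1) * e p) * (root (p - 1) (real p) ^ (p - 1)) ^ e p"
      by (metis power_add power_mult)
    also have "root (p - 1) (real p) ^ (p - 1) = real p"
      using \<open>p \<ge> 2\<close> by simp
    finally show ?thesis
      using \<open>p \<ge> 2\<close> by simp
  qed
  have "mu n ^ s / real (\<Prod>p\<in>prime_factors n. p ^ e p)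
      = (\<Prod>p\<in>prime_factors n. root (p - 1) (real p) ^ s / real p ^ e p)"
    by (simp add: mu_eq_prod_root prod_dividef prod_power_distrib)
  also have "\<dots> = (\<Prod>p\<in>prime_factors n. root (p - 1) (real p) ^ (s - (p - 1) * e p))"
    using quotient by (intro prod.cong) auto
  finally have "mu n ^ s / real (\<Prod>p\<in>prime_factors n. p ^ e p)
      = (\<Prod>p\<in>prime_factors n. root (p - 1) (real p) ^ (s - (p - 1) * e p))" .
  moreover have "root_of_int (root (p - 1) (real p))" if "prime p" for p
    using prime_ge_2_nat[OF that] by (intro root_of_intI[of "p - 1"]) auto
  ultimately show ?thesis
    unfolding e_def by (auto intro!: root_of_int_prod root_of_int_power)
qed

lemma algebraic_int_scaled_hyp2F1_coeff:
  fixes j :: int and n r s :: nat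
  assumes "n > 0"
  shows "algebraic_int (real ((2 * r) choose r)
     * ((real n * mu n) ^ s * coeff (hyp2F1_poly r (- real r + real_of_int j / real n)) s))"
proof (cases "s \<le> r")
  case True
  define A where "A = (\<Prod>p\<in>prime_factors n. p ^ multiplicity p (fact s :: nat))"
  obtain B where AB: "fact s = A * B" "coprime B n"
    using prime_factors_part_decomposition[of "fact s" n] assms by (auto simp: A_def)
  define P where "P = (\<Prod>k<s. (j - int r * int n) + int n * int k)"
  have "int B dvd fact s"
    using AB(1) by (metis dvd_triv_right of_nat_fact of_nat_mult)
  then have "int B dvd P"
    unfolding P_def using AB(2) by (intro dvd_prod_arith_progression) (auto simp: coprime_commute)
  then obtain Q where Q: "P = int B * Q" ..
  have fact_real: "fact s = real A * real B"
    using AB(1) by (metis of_nat_fact of_nat_mult)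
  have "- real r + real_of_int j / real n = real_of_int (j - int r * int n) / real n"
    using assms by (simp add: field_simps)
  then have progression: "real n ^ s * pochhammer (- real r + real_of_int j / real n) s = real_of_int P"
    using assms by (simp add: power_mult_pochhammer_divide P_def)
  have "pochhammer (- 2 * real r) s \<noteq> 0"
    using True by (auto simp: pochhammer_eq_0_iff)
  then have "real ((2 * r) choose r)
      * ((real n * mu n) ^ s * coeff (hyp2F1_poly r (- real r + real_of_int j / real n)) s)
      = real ((2 * r) choose r) * pochhammer (- real r) s / pochhammer (- 2 * real r) s
        * real_of_int P / fact s * mu n ^ s"
    using progression True by (simp add: coeff_hyp2F1_poly power_mult_distrib field_simps)
  also have "\<dots> = real ((2 * r - s) choose r) * real_of_int (int B * Q) / (real A * real B) * mu n ^ s"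
    by (simp only: central_binomial_pochhammer_quotient[OF True] Q fact_real)
  also have "\<dots> = real ((2 * r - s) choose r) * real_of_int Q * (mu n ^ s / real A)"
    using fact_real by (cases "B = 0") auto
  finally have coeff_eq: "real ((2 * r) choose r)
      * ((real n * mu n) ^ s * coeff (hyp2F1_poly r (- real r + real_of_int j / real n)) s)
      = real ((2 * r - s) choose r) * real_of_int Q * (mu n ^ s / real A)" .
  have "root_of_int (real ((2 * r - s) choose r) * real_of_int Q * (mu n ^ s / real A))"
    unfolding A_def by (intro root_of_int_mult root_of_int_Ints root_of_int_mu_power_divide) auto
  then show ?thesis
    unfolding coeff_eq by (rule root_of_int_imp_algebraic_int)
qed (simp add: coeff_hyp2F1_poly)

theorem lemma2p4:
  fixes j :: int and n r :: nat
  assumes "j = 1 \<or> j = -1" and "n > 0" and "r > 0"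
  shows "\<forall>i. algebraic_int (coeff (smult (real ((2 * r) choose r))
            (pcompose (hyp2F1_poly r (- real r + real_of_int j / real n))
                      [:0, real n * mu n:])) i)"
  using algebraic_int_scaled_hyp2F1_coeff[OF assms(2)] by (simp add: coeff_pcompose_linear)

end
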